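(* If $\mathcal{A}$ and $\mathcal{B}$ are leaktight probabilistic automata over the same alphabet with disjoint state sets, then their parallel composition $\mathcal{A}\,\|\,\mathcal{B}$ is leaktight.
   Context: Fix a finite alphabet $A$. A probabilistic automaton is $(Q,\delta_0,\Delta,F)$ with $Q$ finite, an initial distribution $\delta_0$ on $Q$ (a single initial state being the special case of a Dirac distribution), $F\subseteq Q$, $\Delta:Q\times A\to\mathcal{D}(Q)$. For $a\in A$ let $M_a(s,t)=\Delta(s,a)(t)$, for $u=a_0\cdots a_{n-1}$ let $M_u=M_{a_0}\cdots M_{a_{n-1}}$ (identity for the empty word), and $\mathbb{P}(s\xrightarrow{u}t)=M_u(s,t)$. A nonnegative $Q\times Q$ matrix $M$ is idempotent if $M(s,t)>0\iff M^2(s,t)>0$ for all $s,t$; a word $u$ is idempotent if $M_u$ is. A leak is a sequence $(u_n)$ of idempotent words such that $M_{u_n}$ converges to an idempotent matrix $M$ and there exist states $r,q$, both recurrent in the Markov chain with transition matrix $M$, with $\lim_n\mathbb{P}(r\xrightarrow{u_n}q)=0$ and $\mathbb{P}(r\xrightarrow{u_n}q)>0$ for all $n$; an automaton is leaktight if it has no leak (this depends only on $Q$ and $\Delta$). For $\mathcal{A}=(Q^{\mathcal{A}},q_0^{\mathcal{A}},\Delta^{\mathcal{A}},F^{\mathcal{A}})$ and $\mathcal{B}=(Q^{\mathcal{B}},q_0^{\mathcal{B}},\Delta^{\mathcal{B}},F^{\mathcal{B}})$ with $Q^{\mathcal{A}}\cap Q^{\mathcal{B}}=\emptyset$, the parallel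 composition is $\mathcal{A}\,\|\,\mathcal{B}=(Q^{\mathcal{A}}\uplus Q^{\mathcal{B}},\ \tfrac12 q_0^{\mathcal{A}}+\tfrac12 q_0^{\mathcal{B}},\ \Delta,\ F^{\mathcal{A}}\cup F^{\mathcal{B}})$ where $\Delta(q,a)=\Delta^{\mathcal{A}}(q,a)$ if $q\in Q^{\mathcal{A}}$ and $\Delta(q,a)=\Delta^{\mathcal{B}}(q,a)$ if $q\in Q^{\mathcal{B}}$. *)

theory Defs
  imports Complex_Main
begin

text \<open>Probabilistic automata over a finite alphabet (given as a finite set of letters).
  States are drawn from a type 'q; the state set is a finite subset of it.\<close>

record ('q, 'a) pa =
  states :: "'q set"
  init   :: "'q \<Rightarrow> real"
  trans  :: "'q \<Rightarrow> 'a \<Rightarrow> 'q \<Rightarrow> real"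
  final  :: "'q set"

definition is_distr :: "'q set \<Rightarrow> ('q \<Rightarrow> real) \<Rightarrow> bool" where
  "is_distr Q d \<longleftrightarrow> (\<forall>q. 0 \<le> d q) \<and> (\<forall>q. q \<notin> Q \<longrightarrow> d q = 0) \<and> (\<Sum>q\<in>Q. d q) = 1"

definition is_pa :: "'a set \<Rightarrow> ('q, 'a) pa \<Rightarrow> bool" where
  "is_pa A \<A> \<longleftrightarrow> finite (states \<A>) \<and> is_distr (states \<A>) (init \<A>)
     \<and> final \<A> \<subseteq> states \<A>
     \<and> (\<forall>q\<in>states \<A>. \<forall>a\<in>A. is_distr (states \<A>) (trans \<A> q a))"

definition dirac_init :: "('q, 'a) pa \<Rightarrow> bool" where
  "dirac_init \<A> \<longleftrightarrow> (\<exists>q0\<in>states \<A>. init \<A> = (\<lambda>q. if q = q0 then 1 else 0))"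

definition mat_mult :: "'q set \<Rightarrow> ('q \<Rightarrow> 'q \<Rightarrow> real) \<Rightarrow> ('q \<Rightarrow> 'q \<Rightarrow> real) \<Rightarrow> ('q \<Rightarrow> 'q \<Rightarrow> real)" where
  "mat_mult Q M N = (\<lambda>s t. \<Sum>r\<in>Q. M s r * N r t)"

fun word_mat :: "'q set \<Rightarrow> ('q \<Rightarrow> 'a \<Rightarrow> 'q \<Rightarrow> real) \<Rightarrow> 'a list \<Rightarrow> ('q \<Rightarrow> 'q \<Rightarrow> real)" where
  "word_mat Q \<Delta> [] = (\<lambda>s t. if s = t then 1 else 0)"
| "word_mat Q \<Delta> (a # u) = mat_mult Q (\<lambda>s t. \<Delta> s a t) (word_mat Q \<Delta> u)"

definition idempotent_mat :: "'q set \<Rightarrow> ('q \<Rightarrow> 'q \<Rightarrow> real) \<Rightarrow> bool" where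
  "idempotent_mat Q M \<longleftrightarrow> (\<forall>s\<in>Q. \<forall>t\<in>Q. M s t > 0 \<longleftrightarrow> mat_mult Q M M s t > 0)"

definition reach_rel :: "'q set \<Rightarrow> ('q \<Rightarrow> 'q \<Rightarrow> real) \<Rightarrow> ('q \<times> 'q) set" where
  "reach_rel Q M = {(s, t). s \<in> Q \<and> t \<in> Q \<and> M s t > 0}"

definition recurrent :: "'q set \<Rightarrow> ('q \<Rightarrow> 'q \<Rightarrow> real) \<Rightarrow> 'q \<Rightarrow> bool" where
  "recurrent Q M s \<longleftrightarrow> s \<in> Q \<and>
     (\<forall>t. (s, t) \<in> (reach_rel Q M)\<^sup>* \<longrightarrow> (t, s) \<in> (reach_rel Q M)\<^sup>*)"

definition is_leak :: "'a set \<Rightarrow> 'q set \<Rightarrow> ('q \<Rightarrow> 'a \<Rightarrow> 'q \<Rightarrow> real) \<Rightarrow> (nat \<Rightarrow> 'a list) \<Rightarrow> bool" where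
  "is_leak A Q \<Delta> u \<longleftrightarrow>
     (\<forall>n. u n \<in> lists A \<and> idempotent_mat Q (word_mat Q \<Delta> (u n))) \<and>
     (\<exists>M. (\<forall>s\<in>Q. \<forall>t\<in>Q. (\<lambda>n. word_mat Q \<Delta> (u n) s t) \<longlonglongrightarrow> M s t) \<and>
          idempotent_mat Q M \<and>
          (\<exists>r q. recurrent Q M r \<and> recurrent Q M q \<and>
                 (\<lambda>n. word_mat Q \<Delta> (u n) r q) \<longlonglongrightarrow> 0 \<and>
                 (\<forall>n. word_mat Q \<Delta> (u n) r q > 0)))"

definition leaktight :: "'a set \<Rightarrow> ('q, 'a) pa \<Rightarrow> bool" where
  "leaktight A \<A> \<longleftrightarrow> \<not> (\<exists>u. is_leak A (states \<A>) (trans \<A>) u)"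

definition par_comp :: "('q, 'a) pa \<Rightarrow> ('q, 'a) pa \<Rightarrow> ('q, 'a) pa" where
  "par_comp \<A> \<B> =
     \<lparr> states = states \<A> \<union> states \<B>,
       init = (\<lambda>q. init \<A> q / 2 + init \<B> q / 2),
       trans = (\<lambda>q a. if q \<in> states \<A> then trans \<A> q a else trans \<B> q a),
       final = final \<A> \<union> final \<B> \<rparr>"

end

theory Submission
  imports Defs
begin

text \<open>From a state of one component the composed automaton can only reach states of that
  component, and there it behaves exactly like the component. Hence the word matrices, their
  limit and its recurrence structure, restricted to the component of the source state r of a
  leak, form a leak of that component.\<close>

definition leak_witness ::
    "'a set \<Rightarrow> 'q set \<Rightarrow> ('q \<Rightarrow> 'a \<Rightarrow> 'q \<Rightarrow> real) \<Rightarrow> (nat \<Rightarrow> 'a list) \<Rightarrow> ('q \<Rightarrow> 'q \<Rightarrow> real) \<Rightarrow> 'q \<Rightarrow> 'q \<Rightarrow> bool"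
  where
  "leak_witness A Q \<Delta> u M r q \<longleftrightarrow>
     (\<forall>n. u n \<in> lists A \<and> idempotent_mat Q (word_mat Q \<Delta> (u n))) \<and>
     (\<forall>s\<in>Q. \<forall>t\<in>Q. (\<lambda>n. word_mat Q \<Delta> (u n) s t) \<longlonglongrightarrow> M s t) \<and>
     idempotent_mat Q M \<and> recurrent Q M r \<and> recurrent Q M q \<and>
     (\<lambda>n. word_mat Q \<Delta> (u n) r q) \<longlonglongrightarrow> 0 \<and> (\<forall>n. word_mat Q \<Delta> (u n) r q > 0)"

lemma is_leak_iff_leak_witness: "is_leak A Q \<Delta> u \<longleftrightarrow> (\<exists>M r q. leak_witness A Q \<Delta> u M r q)"
  unfolding is_leak_def leak_witness_def by blast

definition mat_closed :: "'q set \<Rightarrow> 'q set \<Rightarrow> ('q \<Rightarrow> 'q \<Rightarrow> real) \<Rightarrow> bool" where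
  "mat_closed Q Q' M \<longleftrightarrow> (\<forall>s\<in>Q'. \<forall>t\<in>Q. t \<notin> Q' \<longrightarrow> M s t = 0)"

lemma mat_mult_restrict:
  assumes "finite Q" "Q' \<subseteq> Q" "mat_closed Q Q' M" "s \<in> Q'"
  shows "mat_mult Q M N s t = mat_mult Q' M N s t"
  unfolding mat_mult_def
  by (rule sum.mono_neutral_right) (use assms in \<open>auto simp: mat_closed_def\<close>)

lemma idempotent_mat_cong:
  assumes "\<And>s t. s \<in> Q \<Longrightarrow> t \<in> Q \<Longrightarrow> M s t = N s t"
  shows "idempotent_mat Q M \<longleftrightarrow> idempotent_mat Q N"
proof -
  have "mat_mult Q M M s t = mat_mult Q N N s t" if "s \<in> Q" "t \<in> Q" for s t
    unfolding mat_mult_def using assms that by (intro sum.cong) auto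
  then show ?thesis
    using assms unfolding idempotent_mat_def by auto
qed

lemma idempotent_mat_restrict:
  assumes "finite Q" "Q' \<subseteq> Q" "mat_closed Q Q' M" "idempotent_mat Q M"
  shows "idempotent_mat Q' M"
  unfolding idempotent_mat_def
proof (intro ballI)
  fix s t assume "s \<in> Q'" "t \<in> Q'"
  then show "M s t > 0 \<longleftrightarrow> mat_mult Q' M M s t > 0"
    using assms(2,4) mat_mult_restrict[OF assms(1-3)] unfolding idempotent_mat_def by (metis subsetD)
qed

lemma mat_closed_limit:
  assumes "\<And>n. mat_closed Q Q' (W n)" "\<And>s t. s \<in> Q' \<Longrightarrow> t \<in> Q \<Longrightarrow> (\<lambda>n. W n s t) \<longlonglongrightarrow> M s t"
  shows "mat_closed Q Q' M"
  unfolding mat_closed_def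
proof (intro ballI impI)
  fix s t assume "s \<in> Q'" "t \<in> Q" "t \<notin> Q'"
  then have "(\<lambda>n. W n s t) = (\<lambda>n. 0)"
    using assms(1) by (auto simp: mat_closed_def)
  with assms(2)[OF \<open>s \<in> Q'\<close> \<open>t \<in> Q\<close>] show "M s t = 0"
    using LIMSEQ_unique tendsto_const by metis
qed

lemma reach_rel_closed:
  assumes "(x, y) \<in> (reach_rel Q M)\<^sup>*" "x \<in> Q'" "mat_closed Q Q' M"
  shows "(x, y) \<in> (reach_rel Q' M)\<^sup>* \<and> y \<in> Q'"
  using assms(1)
proof (induction rule: rtrancl_induct)
  case base
  with assms(2) show ?case by simp
next
  case (step y w)
  then have "y \<in> Q'" "w \<in> Q" "M y w > 0" by (auto simp: reach_rel_def)
  with assms(3) have "w \<in> Q'" by (force simp: mat_closed_def)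
  with \<open>y \<in> Q'\<close> \<open>M y w > 0\<close> have "(y, w) \<in> reach_rel Q' M" by (simp add: reach_rel_def)
  with step.IH \<open>w \<in> Q'\<close> show ?case by (meson rtrancl_into_rtrancl)
qed

lemma recurrent_restrict:
  assumes "Q' \<subseteq> Q" "mat_closed Q Q' M" "recurrent Q M x" "x \<in> Q'"
  shows "recurrent Q' M x"
  unfolding recurrent_def
proof (intro conjI allI impI)
  show "x \<in> Q'" by fact
  fix y assume "(x, y) \<in> (reach_rel Q' M)\<^sup>*"
  moreover have "reach_rel Q' M \<subseteq> reach_rel Q M"
    using assms(1) by (auto simp: reach_rel_def)
  ultimately have xy: "(x, y) \<in> (reach_rel Q M)\<^sup>*" using rtrancl_mono by blast
  then have "(y, x) \<in> (reach_rel Q M)\<^sup>*"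
    using assms(3) by (simp add: recurrent_def)
  moreover have "y \<in> Q'" using reach_rel_closed[OF xy assms(4,2)] ..
  ultimately show "(y, x) \<in> (reach_rel Q' M)\<^sup>*"
    using reach_rel_closed[OF _ _ assms(2)] by blast
qed

locale subautomaton =
  fixes A :: "'a set" and Q Q' :: "'q set" and \<Delta> \<Delta>' :: "'q \<Rightarrow> 'a \<Rightarrow> 'q \<Rightarrow> real"
  assumes finite_states: "finite Q" and sub_states: "Q' \<subseteq> Q"
    and trans_agree: "\<And>s a t. s \<in> Q' \<Longrightarrow> a \<in> A \<Longrightarrow> \<Delta> s a t = \<Delta>' s a t"
    and trans_closed: "\<And>s a t. s \<in> Q' \<Longrightarrow> a \<in> A \<Longrightarrow> t \<notin> Q' \<Longrightarrow> \<Delta>' s a t = 0"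
begin

lemma word_mat_sub_vanish:
  assumes "u \<in> lists A" "s \<in> Q'" "t \<notin> Q'"
  shows "word_mat Q' \<Delta>' u s t = 0"
  using assms
proof (induction u arbitrary: s)
  case (Cons a u)
  then show ?case by (simp add: mat_mult_def)
qed auto

lemma word_mat_sub:
  assumes "u \<in> lists A" "s \<in> Q'"
  shows "word_mat Q \<Delta> u s t = word_mat Q' \<Delta>' u s t"
  using assms
proof (induction u arbitrary: s)
  case (Cons a u)
  then have "a \<in> A" "u \<in> lists A" by auto
  then have closed: "mat_closed Q Q' (\<lambda>s t. \<Delta> s a t)"
    using trans_agree trans_closed by (simp add: mat_closed_def)
  have "word_mat Q \<Delta> (a # u) s t = mat_mult Q (\<lambda>s t. \<Delta> s a t) (word_mat Q \<Delta> u) s t"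
    by simp
  also have "\<dots> = mat_mult Q' (\<lambda>s t. \<Delta> s a t) (word_mat Q \<Delta> u) s t"
    by (rule mat_mult_restrict[OF finite_states sub_states closed \<open>s \<in> Q'\<close>])
  also have "\<dots> = mat_mult Q' (\<lambda>s t. \<Delta>' s a t) (word_mat Q' \<Delta>' u) s t"
    unfolding mat_mult_def using trans_agree Cons \<open>a \<in> A\<close> \<open>u \<in> lists A\<close> by (intro sum.cong) auto
  finally show ?case by simp
qed simp

lemma word_mat_closed:
  assumes "u \<in> lists A"
  shows "mat_closed Q Q' (word_mat Q \<Delta> u)"
  using word_mat_sub[OF assms] word_mat_sub_vanish[OF assms] by (simp add: mat_closed_def)

lemma leak_witness_sub:
  assumes leak: "leak_witness A Q \<Delta> u M r q" and "r \<in> Q'"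
  shows "leak_witness A Q' \<Delta>' u M r q"
proof -
  have words: "u n \<in> lists A" and idem_Q: "idempotent_mat Q (word_mat Q \<Delta> (u n))" for n
    using leak by (simp_all add: leak_witness_def)
  have lim: "\<forall>s\<in>Q. \<forall>t\<in>Q. (\<lambda>n. word_mat Q \<Delta> (u n) s t) \<longlonglongrightarrow> M s t"
    and "idempotent_mat Q M" "recurrent Q M r" "recurrent Q M q"
    and "(\<lambda>n. word_mat Q \<Delta> (u n) r q) \<longlonglongrightarrow> 0" and pos: "\<forall>n. word_mat Q \<Delta> (u n) r q > 0"
    using leak by (simp_all add: leak_witness_def)
  have agree: "word_mat Q \<Delta> (u n) s t = word_mat Q' \<Delta>' (u n) s t" if "s \<in> Q'" for n s t
    using word_mat_sub[OF words that] .
  have idem: "idempotent_mat Q' (word_mat Q' \<Delta>' (u n))" for n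
  proof -
    have "idempotent_mat Q' (word_mat Q \<Delta> (u n))"
      using idempotent_mat_restrict[OF finite_states sub_states word_mat_closed[OF words] idem_Q] .
    moreover have "idempotent_mat Q' (word_mat Q \<Delta> (u n)) \<longleftrightarrow> idempotent_mat Q' (word_mat Q' \<Delta>' (u n))"
      by (rule idempotent_mat_cong) (rule agree)
    ultimately show ?thesis by simp
  qed
  have closed_M: "mat_closed Q Q' M"
  proof (rule mat_closed_limit)
    show "mat_closed Q Q' (word_mat Q \<Delta> (u n))" for n using word_mat_closed words .
    show "(\<lambda>n. word_mat Q \<Delta> (u n) s t) \<longlonglongrightarrow> M s t" if "s \<in> Q'" "t \<in> Q" for s t
      using lim sub_states that by blast
  qed
  have "q \<in> Q'"
    using word_mat_closed[OF words, of 0] pos \<open>r \<in> Q'\<close> \<open>recurrent Q M q\<close>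
    unfolding mat_closed_def recurrent_def by (metis less_irrefl)
  have "recurrent Q' M r" "recurrent Q' M q"
    using recurrent_restrict[OF sub_states closed_M] \<open>recurrent Q M r\<close> \<open>recurrent Q M q\<close>
      \<open>r \<in> Q'\<close> \<open>q \<in> Q'\<close> by blast+
  moreover have "idempotent_mat Q' M"
    using idempotent_mat_restrict[OF finite_states sub_states closed_M \<open>idempotent_mat Q M\<close>] .
  moreover have "\<forall>s\<in>Q'. \<forall>t\<in>Q'. (\<lambda>n. word_mat Q' \<Delta>' (u n) s t) \<longlonglongrightarrow> M s t"
  proof (intro ballI)
    fix s t assume "s \<in> Q'" "t \<in> Q'"
    with lim sub_states have "(\<lambda>n. word_mat Q \<Delta> (u n) s t) \<longlonglongrightarrow> M s t" by blast
    with agree[OF \<open>s \<in> Q'\<close>] show "(\<lambda>n. word_mat Q' \<Delta>' (u n) s t) \<longlonglongrightarrow> M s t" by simp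
  qed
  moreover have "(\<lambda>n. word_mat Q' \<Delta>' (u n) r q) \<longlonglongrightarrow> 0" "\<forall>n. word_mat Q' \<Delta>' (u n) r q > 0"
    using \<open>(\<lambda>n. word_mat Q \<Delta> (u n) r q) \<longlonglongrightarrow> 0\<close> pos agree[OF \<open>r \<in> Q'\<close>] by simp_all
  ultimately show ?thesis
    unfolding leak_witness_def using words idem by blast
qed

end

lemma par_comp_states: "states (par_comp \<A> \<B>) = states \<A> \<union> states \<B>"
  by (simp add: par_comp_def)

lemma subautomaton_par_comp_left:
  assumes "is_pa A \<A>" "is_pa A \<B>"
  shows "subautomaton A (states \<A> \<union> states \<B>) (states \<A>) (trans (par_comp \<A> \<B>)) (trans \<A>)"
  using assms by unfold_locales (auto simp: par_comp_def is_pa_def is_distr_def)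

lemma subautomaton_par_comp_right:
  assumes "is_pa A \<A>" "is_pa A \<B>" "states \<A> \<inter> states \<B> = {}"
  shows "subautomaton A (states \<A> \<union> states \<B>) (states \<B>) (trans (par_comp \<A> \<B>)) (trans \<B>)"
  using assms by unfold_locales (auto simp: par_comp_def is_pa_def is_distr_def)

theorem proposition4p4:
  fixes A :: "'a set" and \<A> \<B> :: "('q, 'a) pa"
  assumes "finite A"
    and "is_pa A \<A>" and "is_pa A \<B>"
    and "dirac_init \<A>" and "dirac_init \<B>"
    and "states \<A> \<inter> states \<B> = {}"
    and "leaktight A \<A>" and "leaktight A \<B>"
  shows "leaktight A (par_comp \<A> \<B>)"
proof -
  interpret left: subautomaton A "states \<A> \<union> states \<B>" "states \<A>" "trans (par_comp \<A> \<B>)" "trans \<A>"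
    using subautomaton_par_comp_left assms(2,3) .
  interpret right: subautomaton A "states \<A> \<union> states \<B>" "states \<B>" "trans (par_comp \<A> \<B>)" "trans \<B>"
    using subautomaton_par_comp_right assms(2,3,6) .
  show ?thesis
    unfolding leaktight_def par_comp_states is_leak_iff_leak_witness
  proof clarify
    fix u M r q
    assume leak: "leak_witness A (states \<A> \<union> states \<B>) (trans (par_comp \<A> \<B>)) u M r q"
    then have "r \<in> states \<A> \<union> states \<B>" by (simp add: leak_witness_def recurrent_def)
    then show False
      using left.leak_witness_sub[OF leak] right.leak_witness_sub[OF leak] assms(7,8)
      unfolding leaktight_def is_leak_iff_leak_witness by blast
  qed
qed

end
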